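(* For all $n,p\in\mathbb{N}$ and all $f,g\in\mathsf{RegBeh}(n,p+n)$, $d^{n,p}(f^\dagger,g^\dagger)\le d^{n,p+n}(f,g)$.
   Context: Fix variables $V=\{v_1,v_2,\dots\}$ and letters $\Sigma$. Expressions $\mathsf{Exp}::=0\mid v\mid a.e\mid e+f\mid\mu v.e$ with operational prechart: $a.e\xrightarrow{a}e$; $v\rhd v$; $e+f$ has the transitions and outputs of $e$ and of $f$; $\mu w.e\rhd v$ if $e\rhd v$, $v\ne w$; $\mu v.e\xrightarrow{a}e'[\mu v.e/v]$ if $e\xrightarrow{a}e'$. Bisimilarity $\sim$ is a congruence for all operations and capture-avoiding substitution; $\mathsf{Exp}/{\sim}$ is a prechart via $[e]\xrightarrow{a}[e']$ iff $e\xrightarrow{a}e'$, $[e]\rhd v$ iff $e\rhd v$. $\mathsf{bd}$ is the behavioural distance on $\mathsf{Exp}/{\sim}$: the least fixpoint, among 1-bounded pseudometrics ordered pointwise, of $d\mapsto\big((x,y)\mapsto\mathcal H(d^\uparrow)(\beta(x),\beta(y))\big)$, where $\beta(x)$ is the finite set of pairs $(a,x')$ with $x\xrightarrow{a}x'$ together with the variables output by $x$; $d^\uparrow((a,x),(a,y))=\tfrac12 d(x,y)$, $d^\uparrow(m,n)=0$ if $m=n$, $1$ otherwise; $\mathcal H(d)(A,B)=\max\{\sup_{x\in A}\inf_{y\in B}d(x,y),\sup_{y\in B}\inf_{x\in A}d(y,x)\}$, $\sup\emptyset=0$, $\inf\emptyset=1$. $\Omega(n)$: elements of $\mathsf{Exp}/{\sim}$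 with all live variables in $\{v_1,\dots,v_n\}$. $\mathsf{RegBeh}(m,n)$: $m$-tuples of elements of $\Omega(n)$, with $d^{m,n}(f,g)=\max_i\mathsf{bd}(f_i,g_i)$ ($0$ if $m=0$). $\mathrm{id}_n=(v_1,\dots,v_n)$; $f;g=(f_1[\vec g/(v_1,\dots,v_n)],\dots)$ (simultaneous substitution); $\langle f,g\rangle$ is concatenation of tuples. Dagger: for $f\in\mathsf{RegBeh}(0,p)$, $f^\dagger$ is the empty tuple; for $f\in\mathsf{RegBeh}(1,p+1)$, $f^\dagger=\mu v_{p+1}.f\in\mathsf{RegBeh}(1,p)$; for $n+1$ components it is defined inductively by the scalar pairing identity $\langle f,g\rangle^\dagger=\langle f^\dagger;\langle\mathrm{id}_p,h^\dagger\rangle,h^\dagger\rangle$ for $f\in\mathsf{RegBeh}(n,p+1+n)$, $g\in\mathsf{RegBeh}(1,p+1+n)$, where $f^\dagger\in\mathsf{RegBeh}(n,p+1)$ and $h=g;\langle\mathrm{id}_{p+1},f^\dagger\rangle\in\mathsf{RegBeh}(1,p+1)$. *)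

theory Defs
  imports Complex_Main
begin

text \<open>Variable v_(i+1) is represented as the natural number i, so v_1 = 0, v_2 = 1, ...
  Letters are elements of an arbitrary type 'a.\<close>

datatype 'a exp = Zero | Var nat | Pre 'a "'a exp" | Plus "'a exp" "'a exp" | Mu nat "'a exp"

primrec fv :: "'a exp \<Rightarrow> nat set" where
  "fv Zero = {}"
| "fv (Var v) = {v}"
| "fv (Pre a e) = fv e"
| "fv (Plus e f) = fv e \<union> fv f"
| "fv (Mu w e) = fv e - {w}"

definition fresh :: "nat set \<Rightarrow> nat" where
  "fresh S = (if S = {} then 0 else Suc (Max S))"

primrec ssubst :: "(nat \<Rightarrow> 'a exp) \<Rightarrow> 'a exp \<Rightarrow> 'a exp" where
  "ssubst \<sigma> Zero = Zero"
| "ssubst \<sigma> (Var v) = \<sigma> v"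
| "ssubst \<sigma> (Pre a e) = Pre a (ssubst \<sigma> e)"
| "ssubst \<sigma> (Plus e f) = Plus (ssubst \<sigma> e) (ssubst \<sigma> f)"
| "ssubst \<sigma> (Mu w e) =
     (let z = fresh (\<Union>u\<in>fv (Mu w e). fv (\<sigma> u)) in Mu z (ssubst (\<sigma>(w := Var z)) e))"

definition subst1 :: "'a exp \<Rightarrow> nat \<Rightarrow> 'a exp \<Rightarrow> 'a exp" where
  "subst1 e v t = ssubst (Var(v := t)) e"

inductive trans :: "'a exp \<Rightarrow> 'a \<Rightarrow> 'a exp \<Rightarrow> bool" where
  tPre: "trans (Pre a e) a e"
| tPlusL: "trans e a e' \<Longrightarrow> trans (Plus e f) a e'"
| tPlusR: "trans f a f' \<Longrightarrow> trans (Plus e f) a f'"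
| tMu: "trans e a e' \<Longrightarrow> trans (Mu v e) a (subst1 e' v (Mu v e))"

inductive outp :: "'a exp \<Rightarrow> nat \<Rightarrow> bool" where
  oVar: "outp (Var v) v"
| oPlusL: "outp e v \<Longrightarrow> outp (Plus e f) v"
| oPlusR: "outp f v \<Longrightarrow> outp (Plus e f) v"
| oMu: "outp e v \<Longrightarrow> v \<noteq> w \<Longrightarrow> outp (Mu w e) v"

definition bisim :: "('a exp \<Rightarrow> 'a exp \<Rightarrow> bool) \<Rightarrow> bool" where
  "bisim R \<longleftrightarrow> (\<forall>e f. R e f \<longrightarrow>
      (\<forall>v. outp e v \<longleftrightarrow> outp f v) \<and>
      (\<forall>a e'. trans e a e' \<longrightarrow> (\<exists>f'. trans f a f' \<and> R e' f')) \<and>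
      (\<forall>a f'. trans f a f' \<longrightarrow> (\<exists>e'. trans e a e' \<and> R e' f')))"

definition bisimilar :: "'a exp \<Rightarrow> 'a exp \<Rightarrow> bool" where
  "bisimilar e f \<longleftrightarrow> (\<exists>R. bisim R \<and> R e f)"

lemma bisim_conv: "bisim R \<Longrightarrow> bisim (conversep R)"
  unfolding bisim_def conversep_iff by blast

lemma bisim_comp:
  assumes R: "bisim R" and S: "bisim S"
  shows "bisim (R OO S)"
  unfolding bisim_def
proof (intro allI impI)
  fix e g assume "(R OO S) e g"
  then obtain f where ef: "R e f" and fg: "S f g" by blast
  have R1: "\<forall>v. outp e v \<longleftrightarrow> outp f v"
    and R2: "\<forall>a e'. trans e a e' \<longrightarrow> (\<exists>f'. trans f a f' \<and> R e' f')"
    and R3: "\<forall>a f'. trans f a f' \<longrightarrow> (\<exists>e'. trans e a e' \<and> R e' f')"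
    using R ef unfolding bisim_def by blast+
  have S1: "\<forall>v. outp f v \<longleftrightarrow> outp g v"
    and S2: "\<forall>a e'. trans f a e' \<longrightarrow> (\<exists>f'. trans g a f' \<and> S e' f')"
    and S3: "\<forall>a f'. trans g a f' \<longrightarrow> (\<exists>e'. trans f a e' \<and> S e' f')"
    using S fg unfolding bisim_def by blast+
  show "(\<forall>v. outp e v \<longleftrightarrow> outp g v) \<and>
      (\<forall>a e'. trans e a e' \<longrightarrow> (\<exists>f'. trans g a f' \<and> (R OO S) e' f')) \<and>
      (\<forall>a f'. trans g a f' \<longrightarrow> (\<exists>e'. trans e a e' \<and> (R OO S) e' f'))"
  proof (intro conjI allI impI)
    fix v show "outp e v \<longleftrightarrow> outp g v" using R1 S1 by blast
  next
    fix a e' assume "trans e a e'"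
    then obtain f' where "trans f a f'" "R e' f'" using R2 by blast
    then obtain g' where "trans g a g'" "S f' g'" using S2 by blast
    then show "\<exists>g'. trans g a g' \<and> (R OO S) e' g'" using \<open>R e' f'\<close> by blast
  next
    fix a g' assume "trans g a g'"
    then obtain f' where "trans f a f'" "S f' g'" using S3 by blast
    then obtain e' where "trans e a e'" "R e' f'" using R3 by blast
    then show "\<exists>e'. trans e a e' \<and> (R OO S) e' g'" using \<open>S f' g'\<close> by blast
  qed
qed

lemma bisim_eq: "bisim (=)"
  unfolding bisim_def by blast

lemma bisimilar_equivp: "equivp bisimilar"
proof (rule equivpI)
  show "reflp bisimilar"
    unfolding reflp_def bisimilar_def using bisim_eq by blast
  show "symp bisimilar"
    unfolding symp_def bisimilar_def using bisim_conv conversep_iff by metis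
  show "transp bisimilar"
    unfolding transp_def bisimilar_def using bisim_comp relcompp.relcompI by metis
qed

quotient_type 'a beh = "'a exp" / bisimilar
  by (rule bisimilar_equivp)

definition btrans :: "'a beh \<Rightarrow> 'a \<Rightarrow> 'a beh \<Rightarrow> bool" where
  "btrans x a y \<longleftrightarrow> (\<exists>e e'. x = abs_beh e \<and> y = abs_beh e' \<and> trans e a e')"

definition boutp :: "'a beh \<Rightarrow> nat \<Rightarrow> bool" where
  "boutp x v \<longleftrightarrow> (\<exists>e. x = abs_beh e \<and> outp e v)"

definition beta :: "'a beh \<Rightarrow> (('a \<times> 'a beh) + nat) set" where
  "beta x = {Inl (a, y) | a y. btrans x a y} \<union> {Inr v | v. boutp x v}"

definition supz :: "'b set \<Rightarrow> ('b \<Rightarrow> real) \<Rightarrow> real" where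
  "supz A f = (if A = {} then 0 else Sup (f ` A))"

definition infz :: "'b set \<Rightarrow> ('b \<Rightarrow> real) \<Rightarrow> real" where
  "infz A f = (if A = {} then 1 else Inf (f ` A))"

definition hausdorff :: "('b \<Rightarrow> 'b \<Rightarrow> real) \<Rightarrow> 'b set \<Rightarrow> 'b set \<Rightarrow> real" where
  "hausdorff d A B = max (supz A (\<lambda>x. infz B (\<lambda>y. d x y))) (supz B (\<lambda>y. infz A (\<lambda>x. d y x)))"

fun lift_d :: "('a beh \<Rightarrow> 'a beh \<Rightarrow> real) \<Rightarrow> (('a \<times> 'a beh) + nat) \<Rightarrow> (('a \<times> 'a beh) + nat) \<Rightarrow> real" where
  "lift_d d (Inl (a, x)) (Inl (b, y)) = (if a = b then d x y / 2 else 1)"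
| "lift_d d (Inr m) (Inr n) = (if m = n then 0 else 1)"
| "lift_d d _ _ = 1"

definition Phi :: "('a beh \<Rightarrow> 'a beh \<Rightarrow> real) \<Rightarrow> 'a beh \<Rightarrow> 'a beh \<Rightarrow> real" where
  "Phi d x y = hausdorff (lift_d d) (beta x) (beta y)"

definition pmetric1 :: "('b \<Rightarrow> 'b \<Rightarrow> real) \<Rightarrow> bool" where
  "pmetric1 d \<longleftrightarrow> (\<forall>x. d x x = 0) \<and> (\<forall>x y. d x y = d y x) \<and>
     (\<forall>x y z. d x z \<le> d x y + d y z) \<and> (\<forall>x y. 0 \<le> d x y \<and> d x y \<le> 1)"

definition bd :: "'a beh \<Rightarrow> 'a beh \<Rightarrow> real" where
  "bd = (THE d. pmetric1 d \<and> Phi d = d \<and>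
           (\<forall>d'. pmetric1 d' \<and> Phi d' = d' \<longrightarrow> (\<forall>x y. d x y \<le> d' x y)))"

definition breach :: "'a beh \<Rightarrow> 'a beh \<Rightarrow> bool" where
  "breach = (\<lambda>x y. \<exists>a. btrans x a y)\<^sup>*\<^sup>*"

text \<open>Omega n: behaviours all of whose live variables (variables output by some reachable state)
  lie in {v_1, ..., v_n}, i.e. have index < n.\<close>
definition Omega :: "nat \<Rightarrow> 'a beh set" where
  "Omega n = {x. \<forall>y v. breach x y \<and> boutp y v \<longrightarrow> v < n}"

text \<open>RegBeh(m,n), represented by tuples (lists) of representative expressions.\<close>
definition RegBeh :: "nat \<Rightarrow> nat \<Rightarrow> 'a exp list set" where
  "RegBeh m n = {fs. length fs = m \<and> (\<forall>e\<in>set fs. abs_beh e \<in> Omega n)}"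

definition dRB :: "nat \<Rightarrow> nat \<Rightarrow> 'a exp list \<Rightarrow> 'a exp list \<Rightarrow> real" where
  "dRB m n f g = Max (insert 0 ((\<lambda>i. bd (abs_beh (f ! i)) (abs_beh (g ! i))) ` {..<m}))"

definition idt :: "nat \<Rightarrow> 'a exp list" where
  "idt n = map Var [0..<n]"

definition seqc :: "'a exp list \<Rightarrow> 'a exp list \<Rightarrow> 'a exp list" where
  "seqc f g = map (ssubst (\<lambda>j. if j < length g then g ! j else Var j)) f"

text \<open>Dagger with p parameters: f in RegBeh(n, p+n) gives f-dagger in RegBeh(n, p).
  Defined by the scalar pairing identity, splitting off the last component.\<close>
primrec dagger_rev :: "nat \<Rightarrow> 'a exp list \<Rightarrow> 'a exp list" where
  "dagger_rev p [] = []"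
| "dagger_rev p (g # rf) =
     (let fd = dagger_rev (Suc p) rf;
          h = seqc [g] (idt (Suc p) @ fd);
          hd' = [Mu p (hd h)]
      in seqc fd (idt p @ hd') @ hd')"

text \<open>For fs = <f, g> with g the last component: dagger p fs = dagger_rev p (rev fs),
  where rev fs = g # rev f, so the recursive call computes f-dagger with p+1 parameters.\<close>
definition dagger :: "nat \<Rightarrow> 'a exp list \<Rightarrow> 'a exp list" where
  "dagger p fs = dagger_rev p (rev fs)"

end

theory Submission
  imports Defs "HOL-Library.FSet"
begin

text \<open>Phi is a contraction with factor 1/2, so bd is the supremum of the iterates
  \<open>bd_approx k = Phi\<^sup>k 0\<close>, and it suffices to bound every iterate. On expressions the
  \<open>k\<close>-th iterate depends only on the depth-\<open>k\<close> observation trees \<open>obs k e\<close> (outputs and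
  labelled successors, unfolded \<open>k\<close> times), and there it is a \<open>k\<close>-step Hausdorff distance.
  Capture-avoiding substitution becomes binder-free grafting of trees,
  \<open>obs k (ssubst \<sigma> e) = tsub k (obs k e) (\<lambda>j u. obs j (\<sigma> u))\<close>, so alpha-renaming is
  invisible; grafting is non-expansive by induction on \<open>k\<close>, and so is the unfolding of \<open>Mu\<close>.
  Hence bd is non-expansive for substitution and \<open>Mu\<close>, and the dagger, being built from these
  by tupling, does not increase the maximal distance of components.\<close>

lemma trans_simps:
  "trans Zero a t \<longleftrightarrow> False"
  "trans (Var v) a t \<longleftrightarrow> False"
  "trans (Pre b e) a t \<longleftrightarrow> a = b \<and> t = e"
  "trans (Plus e f) a t \<longleftrightarrow> trans e a t \<or> trans f a t"
  "trans (Mu v e) a t \<longleftrightarrow> (\<exists>e'. trans e a e' \<and> t = subst1 e' v (Mu v e))"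
  by (auto intro: trans.intros elim: trans.cases)

lemma outp_simps:
  "outp Zero u \<longleftrightarrow> False"
  "outp (Var v) u \<longleftrightarrow> u = v"
  "outp (Pre b e) u \<longleftrightarrow> False"
  "outp (Plus e f) u \<longleftrightarrow> outp e u \<or> outp f u"
  "outp (Mu v e) u \<longleftrightarrow> outp e u \<and> u \<noteq> v"
  by (auto intro: outp.intros elim: outp.cases)

lemma finite_fv: "finite (fv e)"
  by (induction e) auto

lemma fresh_notin: "finite S \<Longrightarrow> fresh S \<notin> S"
proof
  assume "finite S" "fresh S \<in> S"
  then have "fresh S \<le> Max S" by (rule Max_ge)
  with \<open>fresh S \<in> S\<close> show False by (auto simp: fresh_def split: if_splits)
qed

lemma fv_ssubst: "fv (ssubst \<sigma> e) = (\<Union>u\<in>fv e. fv (\<sigma> u))"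
proof (induction e arbitrary: \<sigma>)
  case (Mu w e)
  define z where "z = fresh (\<Union>u\<in>fv (Mu w e). fv (\<sigma> u))"
  have z: "z \<notin> (\<Union>u\<in>fv (Mu w e). fv (\<sigma> u))"
    unfolding z_def by (rule fresh_notin) (simp add: finite_fv)
  have "fv (ssubst \<sigma> (Mu w e)) = (\<Union>u\<in>fv e. fv ((\<sigma>(w := Var z)) u)) - {z}"
    using Mu by (simp add: z_def Let_def)
  also have "\<dots> = (\<Union>u\<in>fv (Mu w e). fv (\<sigma> u))"
    using z by (auto split: if_splits)
  finally show ?case .
qed auto

lemma outp_fv: "outp e v \<Longrightarrow> v \<in> fv e"
  by (induction rule: outp.induct) auto

lemma trans_fv: "trans e a e' \<Longrightarrow> fv e' \<subseteq> fv e"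
  by (induction rule: trans.induct) (auto simp: subst1_def fv_ssubst split: if_splits)

lemma finite_trans: "finite {(a, t). trans e a t}"
proof (induction e)
  case (Plus e f)
  have "{(a, t). trans (Plus e f) a t} = {(a, t). trans e a t} \<union> {(a, t). trans f a t}"
    by (auto simp: trans_simps)
  then show ?case using Plus by simp
next
  case (Mu v e)
  have "{(a, t). trans (Mu v e) a t} =
      (\<lambda>(a, e'). (a, subst1 e' v (Mu v e))) ` {(a, t). trans e a t}"
    by (auto simp: trans_simps)
  then show ?case using Mu by simp
qed (simp_all add: trans_simps)

lemma finite_outp: "finite {v. outp e v}"
  using outp_fv finite_fv by (metis finite_subset mem_Collect_eq subsetI)

definition steps :: "'a exp \<Rightarrow> (('a \<times> 'a exp) + nat) set" where
  "steps e = Inl ` {(a, e'). trans e a e'} \<union> Inr ` {v. outp e v}"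

lemma finite_steps: "finite (steps e)"
  unfolding steps_def by (intro finite_UnI finite_imageI finite_trans finite_outp)

lemma abs_beh_eq_iff: "abs_beh e = abs_beh f \<longleftrightarrow> bisimilar e f"
  by (rule beh.abs_eq_iff)

lemma boutp_abs_beh: "boutp (abs_beh e) v \<longleftrightarrow> outp e v"
proof -
  have "outp f v \<longleftrightarrow> outp e v" if "bisimilar e f" for f
    using that unfolding bisimilar_def bisim_def by blast
  then show ?thesis
    unfolding boutp_def abs_beh_eq_iff using equivp_reflp[OF bisimilar_equivp] by metis
qed

lemma btrans_abs_beh: "btrans (abs_beh e) a y \<longleftrightarrow> (\<exists>e'. trans e a e' \<and> y = abs_beh e')"
proof
  assume "btrans (abs_beh e) a y"
  then obtain e1 e1' where "bisimilar e e1" "y = abs_beh e1'" "trans e1 a e1'"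
    unfolding btrans_def abs_beh_eq_iff by blast
  then obtain e' where "trans e a e'" "bisimilar e' e1'"
    unfolding bisimilar_def bisim_def by blast
  then show "\<exists>e'. trans e a e' \<and> y = abs_beh e'"
    using \<open>y = abs_beh e1'\<close> abs_beh_eq_iff by metis
qed (auto simp: btrans_def)

lemma beta_abs_beh: "beta (abs_beh e) = map_sum (map_prod id abs_beh) id ` steps e"
  unfolding beta_def steps_def by (auto simp: btrans_abs_beh boutp_abs_beh image_Un image_iff)

lemma finite_beta: "finite (beta x)"
  by (induction x rule: beh.abs_induct) (simp add: beta_abs_beh finite_steps)

section \<open>Hausdorff distance on finite sets\<close>

lemma supz_le: "finite A \<Longrightarrow> 0 \<le> c \<Longrightarrow> (\<And>x. x \<in> A \<Longrightarrow> f x \<le> c) \<Longrightarrow> supz A f \<le> c"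
  unfolding supz_def by (auto simp: cSup_eq_Max)

lemma supz_ge: "finite A \<Longrightarrow> x \<in> A \<Longrightarrow> f x \<le> supz A f"
  unfolding supz_def by (auto simp: cSup_eq_Max)

lemma supz_nonneg: "finite A \<Longrightarrow> (\<And>x. x \<in> A \<Longrightarrow> 0 \<le> f x) \<Longrightarrow> 0 \<le> supz A f"
  unfolding supz_def by (auto simp: cSup_eq_Max Max_ge_iff)

lemma infz_le: "finite B \<Longrightarrow> y \<in> B \<Longrightarrow> infz B g \<le> g y"
  unfolding infz_def by (auto simp: cInf_eq_Min)

lemma infz_le_one: "finite B \<Longrightarrow> (\<And>y. y \<in> B \<Longrightarrow> g y \<le> 1) \<Longrightarrow> infz B g \<le> 1"
  unfolding infz_def by (auto simp: cInf_eq_Min Min_le_iff)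

lemma infz_nonneg: "finite B \<Longrightarrow> (\<And>y. y \<in> B \<Longrightarrow> 0 \<le> g y) \<Longrightarrow> 0 \<le> infz B g"
  unfolding infz_def by (auto simp: cInf_eq_Min)

lemma infz_attained: "finite B \<Longrightarrow> infz B g < 1 \<Longrightarrow> \<exists>y\<in>B. infz B g = g y"
proof -
  assume "finite B" "infz B g < 1"
  then have "B \<noteq> {}" "infz B g = Min (g ` B)"
    unfolding infz_def by (auto simp: cInf_eq_Min split: if_splits)
  moreover have "Min (g ` B) \<in> g ` B"
    using \<open>finite B\<close> \<open>B \<noteq> {}\<close> by (intro Min_in) auto
  ultimately show ?thesis by auto
qed

lemma hausdorff_sym: "hausdorff D A B = hausdorff D B A"
  unfolding hausdorff_def by simp

lemma hausdorff_nonneg: "finite A \<Longrightarrow> finite B \<Longrightarrow> (\<And>x y. 0 \<le> D x y) \<Longrightarrow> 0 \<le> hausdorff D A B"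
  unfolding hausdorff_def by (simp add: le_max_iff_disj supz_nonneg infz_nonneg)

lemma hausdorff_le_one: "finite A \<Longrightarrow> finite B \<Longrightarrow> (\<And>x y. D x y \<le> 1) \<Longrightarrow> hausdorff D A B \<le> 1"
  unfolding hausdorff_def by (simp add: supz_le infz_le_one)

lemma hausdorff_le:
  assumes "finite A" "finite B" "0 \<le> c"
    and "\<And>x. x \<in> A \<Longrightarrow> \<exists>y\<in>B. D x y \<le> c"
    and "\<And>y. y \<in> B \<Longrightarrow> \<exists>x\<in>A. D y x \<le> c"
  shows "hausdorff D A B \<le> c"
proof -
  have "infz B (D x) \<le> c" if "x \<in> A" for x
    using assms(4)[OF that] infz_le[OF assms(2)] by (meson order_trans)
  moreover have "infz A (D y) \<le> c" if "y \<in> B" for y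
    using assms(5)[OF that] infz_le[OF assms(1)] by (meson order_trans)
  ultimately show ?thesis
    unfolding hausdorff_def using assms(1-3) by (simp add: supz_le)
qed

lemma hausdorff_self_le: "finite A \<Longrightarrow> (\<And>x. D x x \<le> 0) \<Longrightarrow> hausdorff D A A \<le> 0"
  by (rule hausdorff_le) blast+

lemma hausdorff_le_imp_match:
  assumes "finite A" "finite B" "hausdorff D A B \<le> c" "c < 1" "x \<in> A"
  shows "\<exists>y\<in>B. D x y \<le> c"
proof -
  have "infz B (D x) \<le> supz A (\<lambda>x. infz B (D x))"
    using assms(1,5) by (rule supz_ge)
  also have "\<dots> \<le> c"
    using assms(3) unfolding hausdorff_def by simp
  finally have le: "infz B (D x) \<le> c" .
  moreover have "infz B (D x) < 1" using le assms(4) by linarith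
  then obtain y where "y \<in> B" "infz B (D x) = D x y"
    using infz_attained[OF assms(2)] by blast
  with le show ?thesis by auto
qed

lemma hausdorff_le_imp_match':
  "finite A \<Longrightarrow> finite B \<Longrightarrow> hausdorff D A B \<le> c \<Longrightarrow> c < 1 \<Longrightarrow> y \<in> B \<Longrightarrow> \<exists>x\<in>A. D y x \<le> c"
  using hausdorff_le_imp_match[of B A D c y] by (simp add: hausdorff_sym)

lemma hausdorff_triangle:
  assumes fin: "finite A" "finite B" "finite C"
    and tri: "\<And>x y z. D x z \<le> D x y + D y z" and bounded: "\<And>x y. 0 \<le> D x y \<and> D x y \<le> 1"
  shows "hausdorff D A C \<le> hausdorff D A B + hausdorff D B C"
proof -
  let ?h1 = "hausdorff D A B" and ?h2 = "hausdorff D B C"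
  have nonneg: "0 \<le> ?h1" "0 \<le> ?h2"
    using fin bounded by (simp_all add: hausdorff_nonneg)
  show ?thesis
  proof (cases "?h1 < 1 \<and> ?h2 < 1")
    case False
    then show ?thesis
      using nonneg hausdorff_le_one[of A C D] fin bounded by fastforce
  next
    case True
    show ?thesis
    proof (rule hausdorff_le[OF fin(1,3)])
      fix x assume "x \<in> A"
      then obtain y where "y \<in> B" "D x y \<le> ?h1"
        using hausdorff_le_imp_match[OF fin(1,2) order_refl] True by blast
      moreover from \<open>y \<in> B\<close> obtain z where "z \<in> C" "D y z \<le> ?h2"
        using hausdorff_le_imp_match[OF fin(2,3) order_refl] True by blast
      ultimately show "\<exists>z\<in>C. D x z \<le> ?h1 + ?h2"
        using tri[where x = x and y = y and z = z] by (intro bexI[of _ z]) auto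
    next
      fix z assume "z \<in> C"
      then obtain y where "y \<in> B" "D z y \<le> ?h2"
        using hausdorff_le_imp_match'[OF fin(2,3) order_refl] True by blast
      moreover from \<open>y \<in> B\<close> obtain x where "x \<in> A" "D y x \<le> ?h1"
        using hausdorff_le_imp_match'[OF fin(1,2) order_refl] True by blast
      ultimately show "\<exists>x\<in>A. D z x \<le> ?h1 + ?h2"
        using tri[where x = z and y = y and z = x] by (intro bexI[of _ x]) auto
    qed (use nonneg in simp)
  qed
qed

lemma hausdorff_le_add:
  assumes "finite A" "finite B" "\<And>x y. 0 \<le> D1 x y" "\<And>x y. D2 x y \<le> 1"
    and "\<And>x y. D2 x y \<le> D1 x y + c" "0 \<le> c"
  shows "hausdorff D2 A B \<le> hausdorff D1 A B + c"
proof (cases "hausdorff D1 A B + c < 1")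
  case False
  then show ?thesis
    using hausdorff_le_one[of A B D2] assms(1,2,4) by fastforce
next
  case True
  let ?h = "hausdorff D1 A B"
  have "0 \<le> ?h" using assms(1-3) by (rule hausdorff_nonneg)
  have lt: "?h < 1" using True assms(6) by linarith
  show ?thesis
  proof (rule hausdorff_le[OF assms(1,2)])
    fix x assume "x \<in> A"
    then obtain y where "y \<in> B" "D1 x y \<le> ?h"
      using hausdorff_le_imp_match[OF assms(1,2) order_refl lt] by blast
    then show "\<exists>y\<in>B. D2 x y \<le> ?h + c" using assms(5)[of x y] by force
  next
    fix y assume "y \<in> B"
    then obtain x where "x \<in> A" "D1 y x \<le> ?h"
      using hausdorff_le_imp_match'[OF assms(1,2) order_refl lt] by blast
    then show "\<exists>x\<in>A. D2 y x \<le> ?h + c" using assms(5)[of y x] by force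
  qed (use \<open>0 \<le> ?h\<close> assms(6) in simp)
qed

lemma hausdorff_image:
  assumes "\<And>x y. x \<in> S \<union> S' \<Longrightarrow> y \<in> S \<union> S' \<Longrightarrow> D1 (m1 x) (m1 y) = D2 (m2 x) (m2 y)"
  shows "hausdorff D1 (m1 ` S) (m1 ` S') = hausdorff D2 (m2 ` S) (m2 ` S')"
proof -
  have "infz (m1 ` S') (D1 (m1 x)) = infz (m2 ` S') (D2 (m2 x))" if "x \<in> S" for x
    unfolding infz_def image_image using assms that by (auto intro!: arg_cong[where f=Inf] image_cong)
  moreover have "infz (m1 ` S) (D1 (m1 x)) = infz (m2 ` S) (D2 (m2 x))" if "x \<in> S'" for x
    unfolding infz_def image_image using assms that by (auto intro!: arg_cong[where f=Inf] image_cong)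
  ultimately show ?thesis
    unfolding hausdorff_def supz_def image_image
    by (auto intro!: arg_cong[where f=Sup] image_cong arg_cong2[where f=max])
qed

section \<open>Behavioural distance as a limit of iterates\<close>

fun lift_dist :: "('t \<Rightarrow> 't \<Rightarrow> real) \<Rightarrow> ('b \<times> 't) + nat \<Rightarrow> ('b \<times> 't) + nat \<Rightarrow> real" where
  "lift_dist d (Inl (a, x)) (Inl (b, y)) = (if a = b then d x y / 2 else 1)"
| "lift_dist d (Inr m) (Inr n) = (if m = n then 0 else 1)"
| "lift_dist d _ _ = 1"

lemma lift_d_eq_lift_dist: "lift_d = lift_dist"
proof (intro ext)
  fix d :: "'a beh \<Rightarrow> 'a beh \<Rightarrow> real" and p q
  show "lift_d d p q = lift_dist d p q"
    by (cases "(d, p, q)" rule: lift_d.cases) auto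
qed

lemma lift_dist_less_one_cases:
  "lift_dist d p q < 1 \<Longrightarrow>
    (\<exists>v. p = Inr v \<and> q = Inr v) \<or> (\<exists>a x y. p = Inl (a, x) \<and> q = Inl (a, y) \<and> lift_dist d p q = d x y / 2)"
  by (cases "(d, p, q)" rule: lift_dist.cases) (auto split: if_splits)

lemma lift_dist_bounds:
  assumes "\<And>x y. 0 \<le> d x y \<and> d x y \<le> 1"
  shows "0 \<le> lift_dist d p q \<and> lift_dist d p q \<le> 1"
proof (cases "(d, p, q)" rule: lift_dist.cases)
  case (1 d' a x b y)
  with assms[of x y] show ?thesis by auto
qed auto

lemma lift_dist_self: "(\<And>x. d x x = 0) \<Longrightarrow> lift_dist d p p = 0"
  by (cases "(d, p, p)" rule: lift_dist.cases) auto

lemma lift_dist_triangle: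
  assumes "\<And>x y z. d x z \<le> d x y + d y z" "\<And>x y. 0 \<le> d x y \<and> d x y \<le> 1"
  shows "lift_dist d p r \<le> lift_dist d p q + lift_dist d q r"
proof (cases "lift_dist d p q < 1 \<and> lift_dist d q r < 1")
  case False
  have "\<And>p q. 0 \<le> lift_dist d p q \<and> lift_dist d p q \<le> 1"
    using assms(2) by (rule lift_dist_bounds)
  with False show ?thesis by (smt (verit))
next
  case True
  then show ?thesis
    using lift_dist_less_one_cases[of d p q] lift_dist_less_one_cases[of d q r] assms(1) by auto
qed

lemma lift_dist_le_add:
  "(\<And>x y. d2 x y \<le> d1 x y + c) \<Longrightarrow> 0 \<le> c \<Longrightarrow> lift_dist d2 p q \<le> lift_dist d1 p q + c / 2"
  by (cases "(d2, p, q)" rule: lift_dist.cases) (auto simp: add_divide_distrib[symmetric] divide_right_mono)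

lemma Phi_pmetric1:
  assumes "pmetric1 d"
  shows "pmetric1 (Phi d)"
proof -
  have bounded: "\<And>x y. 0 \<le> d x y \<and> d x y \<le> 1" and self: "\<And>x. d x x = 0"
    and tri: "\<And>x y z. d x z \<le> d x y + d y z"
    using assms unfolding pmetric1_def by blast+
  have lift_bounded: "\<And>p q. 0 \<le> lift_dist d p q \<and> lift_dist d p q \<le> 1"
    using bounded by (rule lift_dist_bounds)
  have lift_self: "\<And>p. lift_dist d p p = 0"
    using self by (rule lift_dist_self)
  have bounds: "0 \<le> Phi d x y \<and> Phi d x y \<le> 1" for x y
    unfolding Phi_def lift_d_eq_lift_dist using lift_bounded
    by (meson finite_beta hausdorff_nonneg hausdorff_le_one)
  have "Phi d x x \<le> 0" for x
    unfolding Phi_def lift_d_eq_lift_dist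
    by (simp add: hausdorff_self_le finite_beta lift_self)
  with bounds have "Phi d x x = 0" for x
    by (meson order.antisym)
  moreover have "Phi d x y = Phi d y x" for x y
    unfolding Phi_def by (rule hausdorff_sym)
  moreover have "Phi d x z \<le> Phi d x y + Phi d y z" for x y z
    unfolding Phi_def lift_d_eq_lift_dist
    by (rule hausdorff_triangle[OF finite_beta finite_beta finite_beta lift_dist_triangle[OF tri bounded]
          lift_bounded])
  ultimately show ?thesis
    unfolding pmetric1_def using bounds by blast
qed

lemma Phi_le_add:
  assumes "pmetric1 d1" "pmetric1 d2" "\<And>x y. d2 x y \<le> d1 x y + c" "0 \<le> c"
  shows "Phi d2 x y \<le> Phi d1 x y + c / 2"
  unfolding Phi_def lift_d_eq_lift_dist
proof (rule hausdorff_le_add[OF finite_beta finite_beta])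
  show "0 \<le> lift_dist d1 p q" "lift_dist d2 p q \<le> 1" for p q
    using assms(1,2) lift_dist_bounds unfolding pmetric1_def by blast+
  show "lift_dist d2 p q \<le> lift_dist d1 p q + c / 2" for p q
    using assms(3,4) by (rule lift_dist_le_add)
qed (use assms(4) in simp)

definition bd_approx :: "nat \<Rightarrow> 'a beh \<Rightarrow> 'a beh \<Rightarrow> real" where
  "bd_approx k = (Phi ^^ k) (\<lambda>_ _. 0)"

lemma bd_approx_0: "bd_approx 0 x y = 0"
  by (simp add: bd_approx_def)

lemma bd_approx_Suc: "bd_approx (Suc k) = Phi (bd_approx k)"
  by (simp add: bd_approx_def)

lemma pmetric1_bd_approx: "pmetric1 (bd_approx k)"
proof (induction k)
  case 0
  show ?case by (simp add: bd_approx_def pmetric1_def)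
next
  case (Suc k)
  then show ?case by (simp add: bd_approx_Suc Phi_pmetric1)
qed

lemma bd_approx_bounds: "0 \<le> bd_approx k x y \<and> bd_approx k x y \<le> 1"
  using pmetric1_bd_approx unfolding pmetric1_def by blast

lemma bd_approx_self: "bd_approx k x x = 0"
  using pmetric1_bd_approx unfolding pmetric1_def by blast

lemma bd_approx_Suc_mono: "bd_approx k x y \<le> bd_approx (Suc k) x y"
proof (induction k arbitrary: x y)
  case (Suc k)
  have "Phi (bd_approx k) x y \<le> Phi (bd_approx (Suc k)) x y + 0 / 2"
    by (rule Phi_le_add[OF pmetric1_bd_approx pmetric1_bd_approx]) (simp_all add: Suc)
  then show ?case by (simp add: bd_approx_Suc)
qed (simp add: bd_approx_0 bd_approx_bounds)

lemma bd_approx_mono: "k \<le> m \<Longrightarrow> bd_approx k x y \<le> bd_approx m x y"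
  using lift_Suc_mono_le[of "\<lambda>k. bd_approx k x y"] bd_approx_Suc_mono by blast

lemma bd_approx_Suc_le: "bd_approx (Suc k) x y \<le> bd_approx k x y + (1/2)^k"
proof (induction k arbitrary: x y)
  case 0
  then show ?case using bd_approx_bounds[of 1 x y] by (simp add: bd_approx_0)
next
  case (Suc k)
  have "Phi (bd_approx (Suc k)) x y \<le> Phi (bd_approx k) x y + (1/2)^k / 2"
    by (rule Phi_le_add[OF pmetric1_bd_approx pmetric1_bd_approx]) (simp_all add: Suc)
  then show ?case by (simp add: bd_approx_Suc)
qed

lemma bd_approx_le_add: "bd_approx m x y \<le> bd_approx k x y + 2 * (1/2)^k"
proof (cases "m \<le> k")
  case True
  then show ?thesis using bd_approx_mono[of m k x y] by (simp add: add_increasing2)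
next
  case False
  then obtain j where m: "m = k + j" using le_Suc_ex nat_le_linear by blast
  have telescope: "bd_approx (k + i) x y \<le> bd_approx k x y + 2 * (1/2)^k - 2 * (1/2)^(k + i)" for i
  proof (induction i)
    case (Suc i)
    then show ?case using bd_approx_Suc_le[of "k + i" x y] by simp
  qed simp
  show ?thesis
    unfolding m using telescope[of j] zero_le_power[of "1/2::real" "k + j"] by linarith
qed

definition bd_lim :: "'a beh \<Rightarrow> 'a beh \<Rightarrow> real" where
  "bd_lim x y = (SUP k. bd_approx k x y)"

lemma bd_approx_le_bd_lim: "bd_approx k x y \<le> bd_lim x y"
  unfolding bd_lim_def using bd_approx_bounds by (intro cSup_upper bdd_aboveI[of _ 1]) auto

lemma bd_lim_le: "(\<And>k. bd_approx k x y \<le> c) \<Longrightarrow> bd_lim x y \<le> c"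
  unfolding bd_lim_def by (rule cSup_least) auto

lemma bd_lim_le_bd_approx_add: "bd_lim x y \<le> bd_approx k x y + 2 * (1/2)^k"
  by (rule bd_lim_le) (rule bd_approx_le_add)

lemma pmetric1_bd_lim: "pmetric1 bd_lim"
  unfolding pmetric1_def
proof (intro conjI allI)
  fix x y z
  show "bd_lim x x = 0"
    by (simp add: bd_lim_def bd_approx_self)
  show "bd_lim x y = bd_lim y x"
    using pmetric1_bd_approx unfolding bd_lim_def pmetric1_def by metis
  show "bd_lim x z \<le> bd_lim x y + bd_lim y z"
  proof (rule bd_lim_le)
    fix k
    have "bd_approx k x z \<le> bd_approx k x y + bd_approx k y z"
      using pmetric1_bd_approx unfolding pmetric1_def by blast
    then show "bd_approx k x z \<le> bd_lim x y + bd_lim y z"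
      using bd_approx_le_bd_lim[of k x y] bd_approx_le_bd_lim[of k y z] by linarith
  qed
  show "0 \<le> bd_lim x y" "bd_lim x y \<le> 1"
    using bd_approx_le_bd_lim[of 0 x y] bd_lim_le[of x y 1] bd_approx_bounds by (auto simp: bd_approx_0)
qed

lemma zero_if_abs_le_halves: "(\<And>k. \<bar>t\<bar> \<le> C * (1/2::real)^k) \<Longrightarrow> t = 0"
proof (rule ccontr)
  assume le: "\<And>k. \<bar>t\<bar> \<le> C * (1/2::real)^k" and "t \<noteq> 0"
  then have "0 < C" using le[of 0] by simp
  then obtain k where "(1/2::real)^k < \<bar>t\<bar> / C"
    using real_arch_pow_inv[of "\<bar>t\<bar> / C" "1/2"] \<open>t \<noteq> 0\<close> by auto
  then show False using le[of k] \<open>0 < C\<close> by (simp add: field_simps)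
qed

lemma Phi_bd_lim: "Phi bd_lim = bd_lim"
proof (intro ext)
  fix x y
  have "\<bar>Phi bd_lim x y - bd_lim x y\<bar> \<le> 1 * (1/2)^k" for k
  proof -
    have "Phi bd_lim x y \<le> bd_approx (Suc k) x y + (1/2)^k"
      using Phi_le_add[OF pmetric1_bd_approx pmetric1_bd_lim, of k "2 * (1/2)^k"]
      by (simp add: bd_lim_le_bd_approx_add bd_approx_Suc)
    moreover have "bd_approx (Suc k) x y \<le> Phi bd_lim x y"
      using Phi_le_add[OF pmetric1_bd_lim pmetric1_bd_approx, of k 0]
      by (simp add: bd_approx_le_bd_lim bd_approx_Suc)
    moreover have "bd_approx (Suc k) x y \<le> bd_lim x y"
      by (rule bd_approx_le_bd_lim)
    moreover have "bd_lim x y \<le> bd_approx (Suc k) x y + (1/2)^k"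
      using bd_lim_le_bd_approx_add[of x y "Suc k"] by simp
    ultimately show ?thesis by (simp add: abs_le_iff)
  qed
  then show "Phi bd_lim x y = bd_lim x y"
    using zero_if_abs_le_halves[of "Phi bd_lim x y - bd_lim x y" 1] by simp
qed

lemma fixpoint_near_bd_approx:
  assumes "pmetric1 d" "Phi d = d"
  shows "\<bar>d x y - bd_approx k x y\<bar> \<le> (1/2)^k"
proof (induction k arbitrary: x y)
  case 0
  then show ?case using assms(1) by (simp add: bd_approx_0 pmetric1_def)
next
  case (Suc k)
  have near: "d x y \<le> bd_approx k x y + (1/2)^k" "bd_approx k x y \<le> d x y + (1/2)^k" for x y
    using Suc[of x y] by (simp_all add: abs_le_iff)
  have "Phi d x y \<le> Phi (bd_approx k) x y + (1/2)^k / 2"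
    by (rule Phi_le_add[OF pmetric1_bd_approx assms(1)]) (simp_all add: near)
  moreover have "Phi (bd_approx k) x y \<le> Phi d x y + (1/2)^k / 2"
    by (rule Phi_le_add[OF assms(1) pmetric1_bd_approx]) (simp_all add: near)
  ultimately show ?case
    unfolding assms(2) bd_approx_Suc abs_le_iff by simp
qed

lemma fixpoint_eq_bd_lim:
  assumes "pmetric1 d" "Phi d = d"
  shows "d = bd_lim"
proof (intro ext)
  fix x y
  have "\<bar>d x y - bd_lim x y\<bar> \<le> 3 * (1/2)^k" for k
    using fixpoint_near_bd_approx[OF assms, of x y k] bd_approx_le_bd_lim[of k x y]
      bd_lim_le_bd_approx_add[of x y k] by (simp add: abs_le_iff)
  then show "d x y = bd_lim x y"
    using zero_if_abs_le_halves[of "d x y - bd_lim x y" 3] by simp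
qed

lemma bd_eq_bd_lim: "bd = bd_lim"
  unfolding bd_def
proof (rule the_equality)
  show "pmetric1 bd_lim \<and> Phi bd_lim = bd_lim \<and>
      (\<forall>d'. pmetric1 d' \<and> Phi d' = d' \<longrightarrow> (\<forall>x y. bd_lim x y \<le> d' x y))"
    using pmetric1_bd_lim Phi_bd_lim fixpoint_eq_bd_lim by auto
qed (use fixpoint_eq_bd_lim in blast)

lemma pmetric1_bd: "pmetric1 bd"
  by (simp add: bd_eq_bd_lim pmetric1_bd_lim)

lemma bd_self: "bd x x = 0"
  using pmetric1_bd unfolding pmetric1_def by blast

lemma bd_le_iff_bd_approx_le: "bd x y \<le> c \<longleftrightarrow> (\<forall>k. bd_approx k x y \<le> c)"
  unfolding bd_eq_bd_lim using bd_lim_le bd_approx_le_bd_lim order_trans by blast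

section \<open>Observation trees\<close>

datatype 'a otree = ONode (outs: "nat fset") (kids: "('a \<times> 'a otree) fset")

lemma otree_eqI:
  assumes "fset (outs T) = fset (outs T')"
    and "\<And>a X. (a, X) \<in> fset (kids T) \<longleftrightarrow> (a, X) \<in> fset (kids T')"
  shows "T = T'"
proof -
  have "fset (kids T) = fset (kids T')" using assms(2) by auto
  with assms(1) show ?thesis by (cases T; cases T') (simp add: fset_inject)
qed

primrec obs :: "nat \<Rightarrow> 'a exp \<Rightarrow> 'a otree" where
  "obs 0 e = ONode {||} {||}"
| "obs (Suc k) e = ONode (Abs_fset {v. outp e v})
     (Abs_fset ((\<lambda>(a, e'). (a, obs k e')) ` {(a, e'). trans e a e'}))"

lemma outs_obs_Suc [simp]: "fset (outs (obs (Suc k) e)) = {v. outp e v}"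
  by (simp add: Abs_fset_inverse finite_outp)

lemma kids_obs_Suc: "fset (kids (obs (Suc k) e)) = (\<lambda>(a, e'). (a, obs k e')) ` {(a, e'). trans e a e'}"
  using finite_trans[of e] by (simp add: Abs_fset_inverse)

lemma kids_obs_Suc_iff [simp]:
  "(a, X) \<in> fset (kids (obs (Suc k) e)) \<longleftrightarrow> (\<exists>e'. trans e a e' \<and> X = obs k e')"
  unfolding kids_obs_Suc by force

declare obs.simps(2) [simp del]

text \<open>The environment is indexed by depth: \<open>\<rho> j u\<close> is the depth-\<open>j\<close> tree substituted for
  the output \<open>u\<close>. This keeps every tree at its intended depth without any truncation.\<close>
primrec tsub :: "nat \<Rightarrow> 'a otree \<Rightarrow> (nat \<Rightarrow> nat \<Rightarrow> 'a otree) \<Rightarrow> 'a otree" where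
  "tsub 0 T \<rho> = ONode {||} {||}"
| "tsub (Suc k) T \<rho> = ONode (ffUnion ((\<lambda>u. outs (\<rho> (Suc k) u)) |`| outs T))
     (((\<lambda>(a, C). (a, tsub k C \<rho>)) |`| kids T) |\<union>| ffUnion ((\<lambda>u. kids (\<rho> (Suc k) u)) |`| outs T))"

lemma outs_tsub_Suc [simp]:
  "fset (outs (tsub (Suc k) T \<rho>)) = (\<Union>u\<in>fset (outs T). fset (outs (\<rho> (Suc k) u)))"
  by (simp add: ffUnion.rep_eq)

lemma kids_tsub_Suc_iff [simp]:
  "(a, X) \<in> fset (kids (tsub (Suc k) T \<rho>)) \<longleftrightarrow>
    (\<exists>C. (a, C) \<in> fset (kids T) \<and> X = tsub k C \<rho>) \<or> (\<exists>u\<in>fset (outs T). (a, X) \<in> fset (kids (\<rho> (Suc k) u)))"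
  by (force simp: ffUnion.rep_eq)

declare tsub.simps(2) [simp del]

primrec tvars :: "nat \<Rightarrow> 'a otree \<Rightarrow> nat set" where
  "tvars 0 T = {}"
| "tvars (Suc k) T = fset (outs T) \<union> (\<Union>(a, C)\<in>fset (kids T). tvars k C)"

lemma tvars_obs: "tvars k (obs k e) \<subseteq> fv e"
proof (induction k arbitrary: e)
  case (Suc k)
  show ?case using Suc.IH trans_fv outp_fv by (fastforce simp: kids_obs_Suc)
qed simp

lemma tsub_agree:
  "(\<And>j u. j \<le> k \<Longrightarrow> u \<in> tvars k T \<Longrightarrow> \<rho> j u = \<rho>' j u) \<Longrightarrow> tsub k T \<rho> = tsub k T \<rho>'"
proof (induction k arbitrary: T)
  case (Suc k)
  have "tsub k C \<rho> = tsub k C \<rho>'" if kid: "(a, C) \<in> fset (kids T)" for a C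
  proof (rule Suc.IH)
    fix j u assume "j \<le> k" "u \<in> tvars k C"
    moreover have "tvars k C \<subseteq> tvars (Suc k) T" using kid by force
    ultimately show "\<rho> j u = \<rho>' j u" using Suc.prems by (meson le_SucI subsetD)
  qed
  moreover have "\<rho> (Suc k) u = \<rho>' (Suc k) u" if "u \<in> fset (outs T)" for u
    using that Suc.prems by simp
  ultimately show ?case
    by (intro otree_eqI) auto
qed simp

lemma tsub_tsub: "tsub k (tsub k T \<rho>1) \<rho>2 = tsub k T (\<lambda>j u. tsub j (\<rho>1 j u) \<rho>2)"
proof (induction k arbitrary: T)
  case (Suc k)
  show ?case
    by (rule otree_eqI) (auto simp: Suc.IH)
qed simp

lemma tsub_obs_Var: "tsub k (obs k (Var v)) (\<lambda>j u. obs j (\<sigma> u)) = obs k (\<sigma> v)"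
  by (cases k) (auto simp: outp_simps trans_simps intro!: otree_eqI)

lemma tsub_obs_Var_env: "tsub k (obs k e) (\<lambda>j u. obs j (Var u)) = obs k e"
proof (induction k arbitrary: e)
  case (Suc k)
  show ?case
    by (rule otree_eqI) (auto simp: outp_simps trans_simps Suc.IH)
qed simp

lemma kids_obs_Mu_iff_tsub:
  fixes e :: "'a exp"
  assumes "\<And>\<sigma> (e'::'a exp). obs k (ssubst \<sigma> e') = tsub k (obs k e') (\<lambda>j u. obs j (\<sigma> u))"
  shows "(a, X) \<in> fset (kids (obs (Suc k) (Mu v e))) \<longleftrightarrow>
    (\<exists>C. (a, C) \<in> fset (kids (obs (Suc k) e)) \<and> X = tsub k C (\<lambda>j u. obs j ((Var(v := Mu v e)) u)))"
proof -
  have "obs k (subst1 e' v (Mu v e)) = tsub k (obs k e') (\<lambda>j u. obs j ((Var(v := Mu v e)) u))" for e'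
    unfolding subst1_def by (rule assms)
  then show ?thesis
    unfolding kids_obs_Suc_iff trans_simps by (auto simp only:)
qed

lemma tsub_obs_fresh:
  assumes "z \<notin> fv t" "\<And>u. u \<noteq> z \<Longrightarrow> \<sigma> u = Var u"
  shows "tsub j (obs j t) (\<lambda>i u. obs i (\<sigma> u)) = obs j t"
proof -
  have "\<sigma> u = Var u" if "u \<in> tvars j (obs j t)" for u
    using that tvars_obs[of j t] assms by (metis in_mono)
  then have "tsub j (obs j t) (\<lambda>i u. obs i (\<sigma> u)) = tsub j (obs j t) (\<lambda>i u. obs i (Var u))"
    by (intro tsub_agree) auto
  then show ?thesis by (simp add: tsub_obs_Var_env)
qed

lemma tsub_tsub_rename:
  assumes fresh: "\<And>u. u \<in> fv e \<Longrightarrow> u \<noteq> w \<Longrightarrow> z \<notin> fv (\<sigma> u)" and "tvars k C \<subseteq> fv e"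
    and M: "\<And>j. j \<le> k \<Longrightarrow> obs j M = tsub j (obs j (Mu w e)) (\<lambda>i u. obs i (\<sigma> u))"
  shows "tsub k (tsub k C (\<lambda>i u. obs i ((\<sigma>(w := Var z)) u))) (\<lambda>i u. obs i ((Var(z := M)) u)) =
    tsub k (tsub k C (\<lambda>i u. obs i ((Var(w := Mu w e)) u))) (\<lambda>i u. obs i (\<sigma> u))"
proof -
  have "tsub j (obs j ((\<sigma>(w := Var z)) u)) (\<lambda>i u. obs i ((Var(z := M)) u)) =
      tsub j (obs j ((Var(w := Mu w e)) u)) (\<lambda>i u. obs i (\<sigma> u))" if "j \<le> k" "u \<in> fv e" for j u
  proof (cases "u = w")
    case True
    then show ?thesis using M[OF that(1)] tsub_obs_Var[of j z "Var(z := M)"] by simp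
  next
    case False
    then show ?thesis
      using fresh[OF that(2)] tsub_obs_fresh[of z "\<sigma> u" "Var(z := M)" j] tsub_obs_Var[of j u \<sigma>] by simp
  qed
  then show ?thesis
    using assms(2) by (auto simp: tsub_tsub intro!: tsub_agree)
qed

lemma outs_obs_ssubst_Mu:
  assumes fresh: "\<And>u. u \<in> fv e \<Longrightarrow> u \<noteq> w \<Longrightarrow> z \<notin> fv (\<sigma> u)"
    and body: "obs (Suc k) E = tsub (Suc k) (obs (Suc k) e) (\<lambda>i u. obs i ((\<sigma>(w := Var z)) u))"
  shows "fset (outs (obs (Suc k) (Mu z E))) =
    fset (outs (tsub (Suc k) (obs (Suc k) (Mu w e)) (\<lambda>i u. obs i (\<sigma> u))))"
proof -
  have "fset (outs (obs (Suc k) (Mu z E))) = fset (outs (obs (Suc k) E)) - {z}"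
    by (auto simp: outp_simps)
  also have "\<dots> = (\<Union>u\<in>{v. outp e v}. {x. outp ((\<sigma>(w := Var z)) u) x}) - {z}"
    unfolding body by simp
  also have "\<dots> = (\<Union>u\<in>{v. outp e v} - {w}. {x. outp (\<sigma> u) x})"
  proof -
    have "z \<notin> {x. outp (\<sigma> u) x}" if "outp e u" "u \<noteq> w" for u
      using fresh[OF outp_fv[OF that(1)] that(2)] outp_fv by blast
    moreover have "{x. outp ((\<sigma>(w := Var z)) u) x} = (if u = w then {z} else {x. outp (\<sigma> u) x})" for u
      by (simp add: outp_simps)
    ultimately show ?thesis by (auto split: if_splits)
  qed
  finally show ?thesis
    by (simp add: outp_simps set_diff_eq)
qed

lemma kids_obs_ssubst_Mu_iff:
  fixes e :: "'a exp"
  assumes lower: "\<And>\<sigma> (e::'a exp). obs k (ssubst \<sigma> e) = tsub k (obs k e) (\<lambda>i u. obs i (\<sigma> u))"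
    and fresh: "\<And>u. u \<in> fv e \<Longrightarrow> u \<noteq> w \<Longrightarrow> z \<notin> fv (\<sigma> u)"
    and body: "obs (Suc k) E = tsub (Suc k) (obs (Suc k) e) (\<lambda>i u. obs i ((\<sigma>(w := Var z)) u))"
    and M: "\<And>j. j \<le> k \<Longrightarrow> obs j (Mu z E) = tsub j (obs j (Mu w e)) (\<lambda>i u. obs i (\<sigma> u))"
  shows "(a, X) \<in> fset (kids (obs (Suc k) (Mu z E))) \<longleftrightarrow>
    (a, X) \<in> fset (kids (tsub (Suc k) (obs (Suc k) (Mu w e)) (\<lambda>i u. obs i (\<sigma> u))))"
proof -
  let ?\<rho> = "\<lambda>i u. obs i (\<sigma> u)" and ?\<rho>' = "\<lambda>i u. obs i ((\<sigma>(w := Var z)) u)"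
    and ?\<rho>z = "\<lambda>i u. obs i ((Var(z := Mu z E)) u)" and ?\<rho>w = "\<lambda>i u. obs i ((Var(w := Mu w e)) u)"
  have env_kid: "(\<exists>t. trans ((\<sigma>(w := Var z)) u) a t \<and> X = tsub k (obs k t) ?\<rho>z) \<longleftrightarrow>
      u \<noteq> w \<and> (\<exists>t. trans (\<sigma> u) a t \<and> X = obs k t)" if "outp e u" for u
  proof (cases "u = w")
    case False
    have "tsub k (obs k t) ?\<rho>z = obs k t" if "trans (\<sigma> u) a t" for t
      using fresh[OF outp_fv[OF \<open>outp e u\<close>] False] trans_fv[OF that] by (intro tsub_obs_fresh) auto
    with False show ?thesis by auto
  qed (simp add: trans_simps)
  have "(a, X) \<in> fset (kids (obs (Suc k) (Mu z E))) \<longleftrightarrow>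
      (\<exists>C. (a, C) \<in> fset (kids (obs (Suc k) E)) \<and> X = tsub k C ?\<rho>z)"
    by (rule kids_obs_Mu_iff_tsub[OF lower])
  also have "\<dots> \<longleftrightarrow>
      (\<exists>C. (a, C) \<in> fset (kids (obs (Suc k) e)) \<and> X = tsub k (tsub k C ?\<rho>') ?\<rho>z) \<or>
      (\<exists>u\<in>{v. outp e v}. \<exists>t. trans ((\<sigma>(w := Var z)) u) a t \<and> X = tsub k (obs k t) ?\<rho>z)"
    unfolding body kids_tsub_Suc_iff kids_obs_Suc_iff outs_obs_Suc by blast
  also have "\<dots> \<longleftrightarrow>
      (\<exists>C. (a, C) \<in> fset (kids (obs (Suc k) e)) \<and> X = tsub k (tsub k C ?\<rho>w) ?\<rho>) \<or>
      (\<exists>u\<in>{v. outp e v} - {w}. \<exists>t. trans (\<sigma> u) a t \<and> X = obs k t)"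
  proof -
    have "tsub k (tsub k C ?\<rho>') ?\<rho>z = tsub k (tsub k C ?\<rho>w) ?\<rho>" if "(a, C) \<in> fset (kids (obs (Suc k) e))" for C
      using that tvars_obs[of "Suc k" e] by (intro tsub_tsub_rename[OF fresh _ M]) force+
    then have "(\<exists>C. (a, C) \<in> fset (kids (obs (Suc k) e)) \<and> X = tsub k (tsub k C ?\<rho>') ?\<rho>z) \<longleftrightarrow>
        (\<exists>C. (a, C) \<in> fset (kids (obs (Suc k) e)) \<and> X = tsub k (tsub k C ?\<rho>w) ?\<rho>)"
      by metis
    moreover have "(\<exists>u\<in>{v. outp e v}. \<exists>t. trans ((\<sigma>(w := Var z)) u) a t \<and> X = tsub k (obs k t) ?\<rho>z) \<longleftrightarrow>
        (\<exists>u\<in>{v. outp e v} - {w}. \<exists>t. trans (\<sigma> u) a t \<and> X = obs k t)"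
      using env_kid by auto
    ultimately show ?thesis by (simp only:)
  qed
  also have "\<dots> \<longleftrightarrow> (a, X) \<in> fset (kids (tsub (Suc k) (obs (Suc k) (Mu w e)) ?\<rho>))"
    unfolding kids_tsub_Suc_iff kids_obs_Mu_iff_tsub[OF lower] by (auto simp: outp_simps)
  finally show ?thesis .
qed

lemma obs_ssubst_Mu:
  fixes e :: "'a exp"
  assumes lower: "\<And>j \<sigma> (e::'a exp). j \<le> k \<Longrightarrow> obs j (ssubst \<sigma> e) = tsub j (obs j e) (\<lambda>i u. obs i (\<sigma> u))"
    and body: "\<And>\<sigma>. obs (Suc k) (ssubst \<sigma> e) = tsub (Suc k) (obs (Suc k) e) (\<lambda>i u. obs i (\<sigma> u))"
  shows "obs (Suc k) (ssubst \<sigma> (Mu w e)) = tsub (Suc k) (obs (Suc k) (Mu w e)) (\<lambda>i u. obs i (\<sigma> u))"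
proof -
  define z where "z = fresh (\<Union>u\<in>fv (Mu w e). fv (\<sigma> u))"
  have fresh: "z \<notin> fv (\<sigma> u)" if "u \<in> fv e" "u \<noteq> w" for u
    using fresh_notin[of "\<Union>u\<in>fv (Mu w e). fv (\<sigma> u)"] that by (auto simp: z_def finite_fv)
  have mu: "ssubst \<sigma> (Mu w e) = Mu z (ssubst (\<sigma>(w := Var z)) e)"
    by (simp add: z_def Let_def)
  have M: "obs j (Mu z (ssubst (\<sigma>(w := Var z)) e)) = tsub j (obs j (Mu w e)) (\<lambda>i u. obs i (\<sigma> u))"
    if "j \<le> k" for j
    using lower[OF that, of \<sigma> "Mu w e"] by (simp only: mu)
  show ?thesis
    unfolding mu
  proof (rule otree_eqI)
    show "fset (outs (obs (Suc k) (Mu z (ssubst (\<sigma>(w := Var z)) e)))) =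
        fset (outs (tsub (Suc k) (obs (Suc k) (Mu w e)) (\<lambda>i u. obs i (\<sigma> u))))"
      using fresh body by (rule outs_obs_ssubst_Mu)
    show "(a, X) \<in> fset (kids (obs (Suc k) (Mu z (ssubst (\<sigma>(w := Var z)) e)))) \<longleftrightarrow>
        (a, X) \<in> fset (kids (tsub (Suc k) (obs (Suc k) (Mu w e)) (\<lambda>i u. obs i (\<sigma> u))))" for a X
      using lower[OF order_refl] fresh body M by (rule kids_obs_ssubst_Mu_iff)
  qed
qed

lemma outs_obs_Suc_Plus:
  "fset (outs (obs (Suc k) (Plus e f))) = fset (outs (obs (Suc k) e)) \<union> fset (outs (obs (Suc k) f))"
  by (auto simp: outp_simps)

lemma kids_obs_Suc_Plus_iff:
  "(a, X) \<in> fset (kids (obs (Suc k) (Plus e f))) \<longleftrightarrow>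
    (a, X) \<in> fset (kids (obs (Suc k) e)) \<or> (a, X) \<in> fset (kids (obs (Suc k) f))"
  by (auto simp: trans_simps)

lemma obs_ssubst: "obs k (ssubst \<sigma> e) = tsub k (obs k e) (\<lambda>j u. obs j (\<sigma> u))"
proof (induction k arbitrary: \<sigma> e rule: less_induct)
  case (less k)
  show ?case
  proof (cases k)
    case (Suc k')
    have lower: "\<And>j \<sigma> (e::'a exp). j \<le> k' \<Longrightarrow> obs j (ssubst \<sigma> e) = tsub j (obs j e) (\<lambda>i u. obs i (\<sigma> u))"
      using less Suc by simp
    show ?thesis
      unfolding Suc
    proof (induction e arbitrary: \<sigma>)
      case (Var v)
      show ?case by (simp add: tsub_obs_Var)
    next
      case (Plus e f)
      show ?case
      proof (rule otree_eqI)
        show "fset (outs (obs (Suc k') (ssubst \<sigma> (Plus e f)))) =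
            fset (outs (tsub (Suc k') (obs (Suc k') (Plus e f)) (\<lambda>j u. obs j (\<sigma> u))))"
          unfolding ssubst.simps outs_obs_Suc_Plus Plus.IH
          by (simp only: outs_tsub_Suc outs_obs_Suc_Plus UN_Un)
        show "(a, X) \<in> fset (kids (obs (Suc k') (ssubst \<sigma> (Plus e f)))) \<longleftrightarrow>
            (a, X) \<in> fset (kids (tsub (Suc k') (obs (Suc k') (Plus e f)) (\<lambda>j u. obs j (\<sigma> u))))" for a X
          unfolding ssubst.simps kids_obs_Suc_Plus_iff Plus.IH kids_tsub_Suc_iff outs_obs_Suc_Plus by blast
      qed
    next
      case (Mu w e)
      show ?case using lower Mu.IH by (rule obs_ssubst_Mu)
    qed (auto simp: trans_simps outp_simps lower intro!: otree_eqI)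
  qed simp
qed

lemma kids_obs_Mu_iff:
  "(a, X) \<in> fset (kids (obs (Suc k) (Mu v e))) \<longleftrightarrow>
    (\<exists>C. (a, C) \<in> fset (kids (obs (Suc k) e)) \<and> X = tsub k C (\<lambda>j u. obs j ((Var(v := Mu v e)) u)))"
  by (rule kids_obs_Mu_iff_tsub) (rule obs_ssubst)

section \<open>Tree distance\<close>

definition tbeta :: "'a otree \<Rightarrow> (('a \<times> 'a otree) + nat) set" where
  "tbeta T = Inl ` fset (kids T) \<union> Inr ` fset (outs T)"

lemma finite_tbeta: "finite (tbeta T)"
  unfolding tbeta_def by simp

primrec tdist :: "nat \<Rightarrow> 'a otree \<Rightarrow> 'a otree \<Rightarrow> real" where
  "tdist 0 T T' = 0"
| "tdist (Suc k) T T' = hausdorff (lift_dist (tdist k)) (tbeta T) (tbeta T')"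

lemma tdist_bounds: "0 \<le> tdist k T T' \<and> tdist k T T' \<le> 1"
proof (induction k arbitrary: T T')
  case (Suc k)
  have "0 \<le> lift_dist (tdist k :: 'a otree \<Rightarrow> _) p q \<and> lift_dist (tdist k) p q \<le> 1" for p q
    using Suc.IH by (rule lift_dist_bounds)
  then show ?case
    unfolding tdist.simps by (meson finite_tbeta hausdorff_nonneg hausdorff_le_one)
qed simp

lemma tdist_sym: "tdist k T T' = tdist k T' T"
  by (cases k) (simp_all add: hausdorff_sym)

lemma tdist_Suc_le_imp_outs_subset:
  assumes "tdist (Suc k) T T' \<le> c" "c < 1"
  shows "fset (outs T) \<subseteq> fset (outs T')"
proof
  fix v assume "v \<in> fset (outs T)"
  then have "hausdorff (lift_dist (tdist k)) (tbeta T) (tbeta T') \<le> c" "Inr v \<in> tbeta T"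
    using assms(1) by (simp_all add: tbeta_def)
  then obtain q where "q \<in> tbeta T'" "lift_dist (tdist k) (Inr v) q \<le> c"
    using hausdorff_le_imp_match[OF finite_tbeta finite_tbeta _ assms(2)] by blast
  then show "v \<in> fset (outs T')"
    using lift_dist_less_one_cases[of "tdist k" "Inr v" q] assms(2) by (auto simp: tbeta_def)
qed

lemma tdist_Suc_le_imp_outs_eq:
  "tdist (Suc k) T T' \<le> c \<Longrightarrow> c < 1 \<Longrightarrow> fset (outs T) = fset (outs T')"
  using tdist_Suc_le_imp_outs_subset[of k T T' c] tdist_Suc_le_imp_outs_subset[of k T' T c]
  by (auto simp: tdist_sym)

lemma tdist_Suc_le_imp_kid_match:
  assumes "tdist (Suc k) T T' \<le> c" "c < 1" "(a, C) \<in> fset (kids T)"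
  shows "\<exists>C'. (a, C') \<in> fset (kids T') \<and> tdist k C C' \<le> 2 * c"
proof -
  have "hausdorff (lift_dist (tdist k)) (tbeta T) (tbeta T') \<le> c" "Inl (a, C) \<in> tbeta T"
    using assms(1,3) by (simp_all add: tbeta_def)
  then obtain q where "q \<in> tbeta T'" "lift_dist (tdist k) (Inl (a, C)) q \<le> c"
    using hausdorff_le_imp_match[OF finite_tbeta finite_tbeta _ assms(2)] by blast
  then show ?thesis
    using lift_dist_less_one_cases[of "tdist k" "Inl (a, C)" q] assms(2) by (auto simp: tbeta_def)
qed

lemma tdist_Suc_leI:
  assumes "0 \<le> c" "fset (outs T) = fset (outs T')"
    and "\<And>a C. (a, C) \<in> fset (kids T) \<Longrightarrow> \<exists>C'. (a, C') \<in> fset (kids T') \<and> tdist k C C' \<le> 2 * c"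
    and "\<And>a C'. (a, C') \<in> fset (kids T') \<Longrightarrow> \<exists>C. (a, C) \<in> fset (kids T) \<and> tdist k C' C \<le> 2 * c"
  shows "tdist (Suc k) T T' \<le> c"
  unfolding tdist.simps
proof (rule hausdorff_le[OF finite_tbeta finite_tbeta assms(1)])
  have "\<exists>q\<in>tbeta T2. lift_dist (tdist k) p q \<le> c"
    if outs: "fset (outs T1) = fset (outs T2)" and p: "p \<in> tbeta T1"
      and kids: "\<And>a C. (a, C) \<in> fset (kids T1) \<Longrightarrow> \<exists>C'. (a, C') \<in> fset (kids T2) \<and> tdist k C C' \<le> 2 * c"
    for T1 T2 :: "'a otree" and p
  proof -
    from p consider (kid) a C where "p = Inl (a, C)" "(a, C) \<in> fset (kids T1)"
      | (out) v where "p = Inr v" "v \<in> fset (outs T1)"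
      unfolding tbeta_def by auto
    then show ?thesis
    proof cases
      case kid
      with kids obtain C' where "(a, C') \<in> fset (kids T2)" "tdist k C C' \<le> 2 * c" by blast
      with kid show ?thesis by (intro bexI[of _ "Inl (a, C')"]) (auto simp: tbeta_def)
    next
      case out
      with outs assms(1) show ?thesis by (intro bexI[of _ "Inr v"]) (auto simp: tbeta_def)
    qed
  qed
  then show "\<And>p. p \<in> tbeta T \<Longrightarrow> \<exists>q\<in>tbeta T'. lift_dist (tdist k) p q \<le> c"
    and "\<And>p. p \<in> tbeta T' \<Longrightarrow> \<exists>q\<in>tbeta T. lift_dist (tdist k) p q \<le> c"
    using assms(2-4) by metis+
qed

lemma tbeta_obs_Suc: "tbeta (obs (Suc k) e) = map_sum (map_prod id (obs k)) id ` steps e"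
  unfolding tbeta_def steps_def by (auto simp: kids_obs_Suc image_Un image_iff)

lemma bd_approx_abs_beh: "bd_approx k (abs_beh e) (abs_beh f) = tdist k (obs k e) (obs k f)"
proof (induction k arbitrary: e f)
  case 0
  then show ?case by (simp add: bd_approx_0)
next
  case (Suc k)
  have "bd_approx (Suc k) (abs_beh e) (abs_beh f) =
      hausdorff (lift_dist (bd_approx k))
        (map_sum (map_prod id abs_beh) id ` steps e) (map_sum (map_prod id abs_beh) id ` steps f)"
    by (simp add: bd_approx_Suc Phi_def beta_abs_beh lift_d_eq_lift_dist)
  also have "\<dots> = hausdorff (lift_dist (tdist k))
        (map_sum (map_prod id (obs k)) id ` steps e) (map_sum (map_prod id (obs k)) id ` steps f)"
  proof (rule hausdorff_image)
    fix p q :: "('a \<times> 'a exp) + nat"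
    show "lift_dist (bd_approx k) (map_sum (map_prod id abs_beh) id p) (map_sum (map_prod id abs_beh) id q) =
        lift_dist (tdist k) (map_sum (map_prod id (obs k)) id p) (map_sum (map_prod id (obs k)) id q)"
      by (cases p; cases q) (auto simp: Suc.IH split_beta map_prod_def)
  qed
  also have "\<dots> = tdist (Suc k) (obs (Suc k) e) (obs (Suc k) f)"
    by (simp add: tbeta_obs_Suc)
  finally show ?case .
qed

section \<open>Non-expansiveness of substitution and recursion\<close>

lemma tsub_kid_match:
  assumes TT': "tdist (Suc k) T T' \<le> c" and "c < 1"
    and \<rho>\<rho>': "\<And>j u. j \<le> Suc k \<Longrightarrow> tdist j (\<rho> j u) (\<rho>' j u) \<le> c"
    and graft: "\<And>C C'. tdist k C C' \<le> 2 * c \<Longrightarrow> tdist k (tsub k C \<rho>) (tsub k C' \<rho>') \<le> 2 * c"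
    and kid: "(a, X) \<in> fset (kids (tsub (Suc k) T \<rho>))"
  shows "\<exists>X'. (a, X') \<in> fset (kids (tsub (Suc k) T' \<rho>')) \<and> tdist k X X' \<le> 2 * c"
proof -
  from kid consider (tree) C where "(a, C) \<in> fset (kids T)" "X = tsub k C \<rho>"
    | (env) u where "u \<in> fset (outs T)" "(a, X) \<in> fset (kids (\<rho> (Suc k) u))"
    by auto
  then show ?thesis
  proof cases
    case tree
    then obtain C' where "(a, C') \<in> fset (kids T')" "tdist k C C' \<le> 2 * c"
      using tdist_Suc_le_imp_kid_match[OF TT' \<open>c < 1\<close>] by blast
    with tree graft show ?thesis by auto
  next
    case env
    obtain X' where "(a, X') \<in> fset (kids (\<rho>' (Suc k) u))" "tdist k X X' \<le> 2 * c"
      using tdist_Suc_le_imp_kid_match[OF \<rho>\<rho>'[of "Suc k" u] \<open>c < 1\<close> env(2)] by auto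
    moreover have "u \<in> fset (outs T')"
      using tdist_Suc_le_imp_outs_eq[OF TT' \<open>c < 1\<close>] env(1) by blast
    ultimately show ?thesis by auto
  qed
qed

lemma tdist_tsub:
  assumes "tdist k T T' \<le> c" "\<And>j u. j \<le> k \<Longrightarrow> tdist j (\<rho> j u) (\<rho>' j u) \<le> c"
  shows "tdist k (tsub k T \<rho>) (tsub k T' \<rho>') \<le> c"
  using assms
proof (induction k arbitrary: T T' c)
  case (Suc k)
  have "0 \<le> c" using Suc.prems(1) tdist_bounds by (meson order_trans)
  show ?case
  proof (cases "c < 1")
    case True
    have env2: "tdist j (\<rho> j u) (\<rho>' j u) \<le> 2 * c" if "j \<le> k" for j u
      using Suc.prems(2)[of j u] that \<open>0 \<le> c\<close> by simp
    have graft: "tdist k (tsub k C \<rho>) (tsub k C' \<rho>') \<le> 2 * c" if "tdist k C C' \<le> 2 * c" for C C'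
      using that env2 by (rule Suc.IH)
    have graft': "tdist k (tsub k C' \<rho>') (tsub k C \<rho>) \<le> 2 * c" if "tdist k C' C \<le> 2 * c" for C C'
      using graft[of C C'] that by (simp add: tdist_sym)
    have env': "tdist j (\<rho>' j u) (\<rho> j u) \<le> c" if "j \<le> Suc k" for j u
      using Suc.prems(2)[OF that] by (simp add: tdist_sym)
    show ?thesis
    proof (rule tdist_Suc_leI[OF \<open>0 \<le> c\<close>])
      show "fset (outs (tsub (Suc k) T \<rho>)) = fset (outs (tsub (Suc k) T' \<rho>'))"
        using tdist_Suc_le_imp_outs_eq[OF Suc.prems(1) True]
          tdist_Suc_le_imp_outs_eq[OF Suc.prems(2) True] by simp
      show "\<exists>X'. (a, X') \<in> fset (kids (tsub (Suc k) T' \<rho>')) \<and> tdist k X X' \<le> 2 * c"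
        if "(a, X) \<in> fset (kids (tsub (Suc k) T \<rho>))" for a X
        using tsub_kid_match[OF Suc.prems(1) True Suc.prems(2) graft that] .
      show "\<exists>X. (a, X) \<in> fset (kids (tsub (Suc k) T \<rho>)) \<and> tdist k X' X \<le> 2 * c"
        if "(a, X') \<in> fset (kids (tsub (Suc k) T' \<rho>'))" for a X'
        using Suc.prems(1) by (intro tsub_kid_match[OF _ True env' graft' that]) (simp add: tdist_sym)
    qed
  qed (use tdist_bounds[of "Suc k" "tsub (Suc k) T \<rho>" "tsub (Suc k) T' \<rho>'"] in linarith)
qed simp

lemma tdist_obs_self: "tdist k (obs k e) (obs k e) = 0"
  using bd_approx_self[of k "abs_beh e"] by (simp add: bd_approx_abs_beh)

lemma obs_Mu_kid_match:
  assumes ff': "tdist (Suc k) (obs (Suc k) f) (obs (Suc k) f') \<le> c" and "c < 1"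
    and mu: "\<And>j. j \<le> k \<Longrightarrow> tdist j (obs j (Mu v f)) (obs j (Mu v f')) \<le> 2 * c"
    and kid: "(a, X) \<in> fset (kids (obs (Suc k) (Mu v f)))"
  shows "\<exists>X'. (a, X') \<in> fset (kids (obs (Suc k) (Mu v f'))) \<and> tdist k X X' \<le> 2 * c"
proof -
  have "0 \<le> c" using ff' tdist_bounds by (meson order_trans)
  obtain C where C: "(a, C) \<in> fset (kids (obs (Suc k) f))"
    "X = tsub k C (\<lambda>j u. obs j ((Var(v := Mu v f)) u))"
    using kid unfolding kids_obs_Mu_iff by blast
  obtain C' where C': "(a, C') \<in> fset (kids (obs (Suc k) f'))" "tdist k C C' \<le> 2 * c"
    using tdist_Suc_le_imp_kid_match[OF ff' \<open>c < 1\<close> C(1)] by blast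
  have "tdist k X (tsub k C' (\<lambda>j u. obs j ((Var(v := Mu v f')) u))) \<le> 2 * c"
    unfolding C(2)
  proof (rule tdist_tsub[OF C'(2)])
    show "tdist j (obs j ((Var(v := Mu v f)) u)) (obs j ((Var(v := Mu v f')) u)) \<le> 2 * c"
      if "j \<le> k" for j u
      using mu[OF that] \<open>0 \<le> c\<close> by (simp add: tdist_obs_self)
  qed
  with C'(1) show ?thesis
    unfolding kids_obs_Mu_iff by blast
qed

lemma bd_approx_Mu_le:
  "bd_approx k (abs_beh e) (abs_beh e') \<le> c \<Longrightarrow> bd_approx k (abs_beh (Mu v e)) (abs_beh (Mu v e')) \<le> c"
proof (induction k arbitrary: e e' c)
  case (Suc k)
  have "0 \<le> c" using Suc.prems bd_approx_bounds by (meson order_trans)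
  show ?case
  proof (cases "c < 1")
    case True
    have ee': "tdist (Suc k) (obs (Suc k) e) (obs (Suc k) e') \<le> c"
      using Suc.prems by (simp add: bd_approx_abs_beh)
    have "bd_approx k (abs_beh (Mu v e)) (abs_beh (Mu v e')) \<le> c"
      using Suc.IH Suc.prems bd_approx_Suc_mono order_trans by blast
    then have mu: "tdist j (obs j (Mu v e)) (obs j (Mu v e')) \<le> 2 * c" if "j \<le> k" for j
      using bd_approx_mono[OF that, of "abs_beh (Mu v e)" "abs_beh (Mu v e')"] \<open>0 \<le> c\<close>
      by (simp add: bd_approx_abs_beh)
    show ?thesis
      unfolding bd_approx_abs_beh
    proof (rule tdist_Suc_leI[OF \<open>0 \<le> c\<close>])
      show "fset (outs (obs (Suc k) (Mu v e))) = fset (outs (obs (Suc k) (Mu v e')))"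
        using tdist_Suc_le_imp_outs_eq[OF ee' True] by (auto simp: outp_simps)
      show "\<exists>X'. (a, X') \<in> fset (kids (obs (Suc k) (Mu v e'))) \<and> tdist k X X' \<le> 2 * c"
        if "(a, X) \<in> fset (kids (obs (Suc k) (Mu v e)))" for a X
        using obs_Mu_kid_match[OF ee' True mu that] .
      show "\<exists>X. (a, X) \<in> fset (kids (obs (Suc k) (Mu v e))) \<and> tdist k X' X \<le> 2 * c"
        if "(a, X') \<in> fset (kids (obs (Suc k) (Mu v e')))" for a X'
        using ee' mu by (intro obs_Mu_kid_match[OF _ True _ that]) (simp_all add: tdist_sym)
    qed
  qed (use bd_approx_bounds[of "Suc k" "abs_beh (Mu v e)" "abs_beh (Mu v e')"] in linarith)
qed (simp add: bd_approx_0)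

lemma bd_ssubst_le:
  assumes "bd (abs_beh e) (abs_beh e') \<le> c" "\<And>u. bd (abs_beh (\<sigma> u)) (abs_beh (\<sigma>' u)) \<le> c"
  shows "bd (abs_beh (ssubst \<sigma> e)) (abs_beh (ssubst \<sigma>' e')) \<le> c"
  unfolding bd_le_iff_bd_approx_le
proof
  fix k
  have "tdist k (tsub k (obs k e) (\<lambda>j u. obs j (\<sigma> u))) (tsub k (obs k e') (\<lambda>j u. obs j (\<sigma>' u))) \<le> c"
    using assms by (intro tdist_tsub) (simp_all add: bd_le_iff_bd_approx_le flip: bd_approx_abs_beh)
  then show "bd_approx k (abs_beh (ssubst \<sigma> e)) (abs_beh (ssubst \<sigma>' e')) \<le> c"
    by (simp add: bd_approx_abs_beh obs_ssubst)
qed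

lemma bd_Mu_le: "bd (abs_beh (Mu v e)) (abs_beh (Mu v e')) \<le> bd (abs_beh e) (abs_beh e')"
  using bd_approx_Mu_le bd_le_iff_bd_approx_le order_refl by metis

section \<open>Tuples and the dagger\<close>

definition bd_close :: "real \<Rightarrow> 'a exp \<Rightarrow> 'a exp \<Rightarrow> bool" where
  "bd_close c e f \<longleftrightarrow> bd (abs_beh e) (abs_beh f) \<le> c"

lemma bd_close_refl: "0 \<le> c \<Longrightarrow> bd_close c e e"
  by (simp add: bd_close_def bd_self)

lemma bd_close_Mu: "bd_close c e e' \<Longrightarrow> bd_close c (Mu v e) (Mu v e')"
  unfolding bd_close_def using bd_Mu_le order_trans by blast

lemma list_all2_bd_close_seqc:
  assumes "0 \<le> c" "list_all2 (bd_close c) f f'" "list_all2 (bd_close c) g g'"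
  shows "list_all2 (bd_close c) (seqc f g) (seqc f' g')"
proof -
  let ?\<sigma> = "\<lambda>g j. if j < length g then g ! j else Var j"
  have env: "bd_close c (?\<sigma> g j) (?\<sigma> g' j)" for j
    using assms(1,3) by (auto simp: list_all2_conv_all_nth bd_close_refl)
  have "bd_close c (ssubst (?\<sigma> g) e) (ssubst (?\<sigma> g') e')" if "bd_close c e e'" for e e'
    using that env unfolding bd_close_def by (rule bd_ssubst_le)
  with assms(2) show ?thesis
    unfolding seqc_def list.rel_map by (rule list_all2_mono)
qed

lemma list_all2_bd_close_idt: "0 \<le> c \<Longrightarrow> list_all2 (bd_close c) (idt p) (idt p)"
  by (simp add: list_all2_refl bd_close_refl)

lemma list_all2_bd_close_dagger_rev:
  "0 \<le> c \<Longrightarrow> list_all2 (bd_close c) f g \<Longrightarrow> list_all2 (bd_close c) (dagger_rev p f) (dagger_rev p g)"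
proof (induction f arbitrary: p g)
  case (Cons x rf)
  from Cons.prems(2) obtain y rg
    where g: "g = y # rg" and xy: "bd_close c x y" and rfg: "list_all2 (bd_close c) rf rg"
    by (cases g) auto
  let ?fd = "dagger_rev (Suc p) rf" and ?gd = "dagger_rev (Suc p) rg"
  have fd: "list_all2 (bd_close c) ?fd ?gd"
    using Cons.IH Cons.prems(1) rfg by blast
  have "list_all2 (bd_close c) (seqc [x] (idt (Suc p) @ ?fd)) (seqc [y] (idt (Suc p) @ ?gd))"
    using Cons.prems(1) xy fd
    by (intro list_all2_bd_close_seqc list_all2_appendI list_all2_bd_close_idt) simp_all
  then have mu: "list_all2 (bd_close c) [Mu p (hd (seqc [x] (idt (Suc p) @ ?fd)))]
      [Mu p (hd (seqc [y] (idt (Suc p) @ ?gd)))]"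
    by (simp add: seqc_def bd_close_Mu)
  show ?case
    unfolding g dagger_rev.simps Let_def
    using Cons.prems(1) fd mu
    by (intro list_all2_appendI list_all2_bd_close_seqc list_all2_bd_close_idt)
qed simp

lemma length_dagger [simp]: "length (dagger p f) = length f"
proof -
  have "length (dagger_rev p l) = length l" for l :: "'a exp list"
    by (induction l arbitrary: p) (simp_all add: Let_def seqc_def)
  then show ?thesis by (simp add: dagger_def)
qed

lemma dRB_nonneg: "0 \<le> dRB m n f g"
  unfolding dRB_def by (rule Max_ge) auto

lemma dRB_le_iff:
  assumes "length f = m" "length g = m" "0 \<le> c"
  shows "dRB m n f g \<le> c \<longleftrightarrow> list_all2 (bd_close c) f g"
  using assms by (auto simp: dRB_def list_all2_conv_all_nth bd_close_def)

(* The second index of dRB does not enter its value. *)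
lemma dRB_dagger_le:
  assumes "length f = m" "length g = m"
  shows "dRB m p (dagger p f) (dagger p g) \<le> dRB m q f g"
proof -
  let ?c = "dRB m q f g"
  have "list_all2 (bd_close ?c) f g"
    using dRB_le_iff[of f m g ?c q] assms dRB_nonneg[of m q f g] by simp
  then have "list_all2 (bd_close ?c) (dagger p f) (dagger p g)"
    unfolding dagger_def by (intro list_all2_bd_close_dagger_rev dRB_nonneg) (simp add: list_all2_rev)
  then show ?thesis
    using dRB_le_iff[of "dagger p f" m "dagger p g" ?c p] assms dRB_nonneg[of m q f g] by simp
qed

theorem mainTheorem20:
  fixes f g :: "'a exp list" and n p :: nat
  assumes "f \<in> RegBeh n (p + n)" and "g \<in> RegBeh n (p + n)"
  shows "dRB n p (dagger p f) (dagger p g) \<le> dRB n (p + n) f g"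
  using assms by (intro dRB_dagger_le) (simp_all add: RegBeh_def)

end
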